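(* Fix $\lambda>0$. (i) For every $\phi\in\mathscr F$, $\mathcal M^\lambda\phi(x)\in\mathbb R$ for all $x\in\mathbb R$. (ii) For all $\phi_1,\phi_2\in\mathscr F$, $\|\mathcal M^\lambda\phi_1-\mathcal M^\lambda\phi_2\|_{L^\infty(\mathbb R)}\le\|\phi_1-\phi_2\|_{L^\infty(\mathbb R)}$. (iii) $\mathcal M^\lambda$ is concave: for $\phi_1,\phi_2\in\mathscr F$ and $\eta\in[0,1]$, $\mathcal M^\lambda[\eta\phi_1+(1-\eta)\phi_2]\ge\eta\mathcal M^\lambda\phi_1+(1-\eta)\mathcal M^\lambda\phi_2$. (iv) $\mathcal M^\lambda$ is nondecreasing: if $\phi_1,\phi_2\in\mathscr F$ with $\phi_1\le\phi_2$ on $\mathbb R$, then $\mathcal M^\lambda\phi_1\le\mathcal M^\lambda\phi_2$.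
   Context: Let $l:\mathbb R\to\mathbb R$ satisfy: there is $K>0$ with $\inf l=l(0)=K$ and $l(x)+l(y)\ge l(x+y)+K$ for all $x,y$; $l(\xi)\to+\infty$ as $|\xi|\to\infty$; $l$ is $L_l$-Lipschitz for some $L_l>0$. For $x\in\mathbb R$, $\Phi_x=\mathcal N(-x,1)$. For $\lambda>0$ and $\phi$ bounded below, $\mathcal M^\lambda\phi(x)=\inf\{\int_{\mathbb R}(\phi(x+\xi)+l(\xi))\mu(d\xi)+\lambda D_{KL}(\mu\|\Phi_x)\}$, infimum over probability measures $\mu$ on $\mathbb R$ with $\mu\ll\Phi_x$, where $D_{KL}(\mu\|\Phi_x)=\int\frac{d\mu}{d\Phi_x}\log\frac{d\mu}{d\Phi_x}\,d\Phi_x$. $\mathscr F$ is the set of $\phi:\mathbb R\to\mathbb R$ with $\inf_x\phi(x)\in\mathbb R$ and $\sup_x|\phi(x)|/(1+|x|^\beta)<\infty$ for some $\beta\ge0$. *)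

theory Defs
  imports "HOL-Probability.Probability"
begin

text \<open>Extended-real integral of a real function: positive part minus negative part
  (used only for integrands bounded below, so the negative part is finite and the
  value lies in (-infinity, +infinity]).\<close>
definition eint :: "real measure \<Rightarrow> (real \<Rightarrow> real) \<Rightarrow> ereal" where
  "eint M g = enn2ereal (\<integral>\<^sup>+ t. ennreal (max (g t) 0) \<partial>M)
              - enn2ereal (\<integral>\<^sup>+ t. ennreal (max (- g t) 0) \<partial>M)"

definition Phi :: "real \<Rightarrow> real measure" where
  "Phi x = density lborel (normal_density (- x) 1)"

definition DKL :: "real measure \<Rightarrow> real measure \<Rightarrow> ereal" where
  "DKL mu nu = eint nu (\<lambda>t. enn2real (RN_deriv nu mu t) * ln (enn2real (RN_deriv nu mu t)))"

definition admissible :: "real \<Rightarrow> real measure set" where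
  "admissible x = {mu. prob_space mu \<and> sets mu = sets borel \<and> absolutely_continuous (Phi x) mu}"

definition Mop :: "(real \<Rightarrow> real) \<Rightarrow> real \<Rightarrow> (real \<Rightarrow> real) \<Rightarrow> real \<Rightarrow> ereal" where
  "Mop l lam phi x = (INF mu \<in> admissible x.
      eint mu (\<lambda>\<xi>. phi (x + \<xi>) + l \<xi>) + ereal lam * DKL mu (Phi x))"

text \<open>The class script-F (Borel measurability made explicit, needed for the integrals).\<close>
definition FF :: "(real \<Rightarrow> real) set" where
  "FF = {phi. phi \<in> borel_measurable borel \<and> bdd_below (range phi) \<and>
          (\<exists>\<beta>\<ge>0. bdd_above (range (\<lambda>x. \<bar>phi x\<bar> / (1 + \<bar>x\<bar> powr \<beta>))))}"

definition Linf :: "(real \<Rightarrow> real) \<Rightarrow> ereal" where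
  "Linf g = esssup lborel (\<lambda>x. ereal \<bar>g x\<bar>)"

end

theory Submission
  imports Defs
begin

text \<open>
  \<open>M\<^sup>\<lambda>\<phi>(x)\<close> is the infimum over admissible \<open>\<mu>\<close> of the objective
  \<open>\<integral>(\<phi>(x + \<xi>) + l(\<xi>)) d\<mu> + \<lambda> D\<^sub>K\<^sub>L(\<mu> \<parallel> \<Phi>\<^sub>x)\<close>, which for fixed \<open>\<mu>\<close> is monotone and
  affine in \<open>\<phi>\<close>. An infimum of such maps is monotone and concave, and since adding a constant
  to \<open>\<phi>\<close> adds it to every objective, it is 1-Lipschitz for the sup norm; the norm may be taken
  essential because every admissible \<open>\<mu>\<close> is absolutely continuous w.r.t. Lebesgue measure.

  Finiteness: every objective is at least \<open>inf \<phi> + inf l - \<lambda>\<close> (as \<open>r ln r \<ge> -1\<close>), and the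
  choice \<open>\<mu> = \<Phi>\<^sub>x\<close> gives a finite value because \<open>\<phi>\<close> grows polynomially and \<open>l\<close> linearly.
  The essential supremum of \<open>M\<^sup>\<lambda>\<phi>\<^sub>1 - M\<^sup>\<lambda>\<phi>\<^sub>2\<close> requires measurability, which comes from
  Lipschitz continuity in \<open>x\<close>: translating \<open>\<mu>\<close> by \<open>h\<close> leaves the divergence unchanged and
  moves the cost \<open>l\<close> by at most \<open>L\<^sub>l |h|\<close>.
\<close>

section \<open>Integrals bounded below\<close>

lemma eint_mono_AE:
  assumes "AE t in M. f t \<le> g t"
  shows "eint M f \<le> eint M g"
proof -
  have "(\<integral>\<^sup>+ t. ennreal (max (f t) 0) \<partial>M) \<le> (\<integral>\<^sup>+ t. ennreal (max (g t) 0) \<partial>M)"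
       "(\<integral>\<^sup>+ t. ennreal (max (- g t) 0) \<partial>M) \<le> (\<integral>\<^sup>+ t. ennreal (max (- f t) 0) \<partial>M)"
    by (intro nn_integral_mono_AE; use assms in \<open>auto elim!: eventually_mono intro: ennreal_leI\<close>)+
  then show ?thesis
    unfolding eint_def by (intro ereal_minus_mono) (simp_all add: less_eq_ennreal.rep_eq)
qed

lemma eint_distr:
  assumes [measurable]: "f \<in> borel_measurable N" "T \<in> measurable M N"
  shows "eint (distr M N T) f = eint M (\<lambda>x. f (T x))"
  unfolding eint_def by (simp add: nn_integral_distr)

lemma eint_eq_nn_integral_plus:
  assumes "prob_space M" and [measurable]: "f \<in> borel_measurable M"
    and lower: "\<And>t. t \<in> space M \<Longrightarrow> c \<le> f t"
  shows "eint M f = enn2ereal (\<integral>\<^sup>+ t. ennreal (f t - c) \<partial>M) + ereal c"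
proof -
  interpret prob_space M by fact
  define k where "k = max (- c) 0"
  have k: "0 \<le> k" "0 \<le> c + k"
    unfolding k_def by auto
  have neg_part_le: "max (- f t) 0 \<le> k" if "t \<in> space M" for t
    using lower[OF that] unfolding k_def by auto
  define P where "P = (\<integral>\<^sup>+ t. ennreal (max (f t) 0) \<partial>M)"
  define N where "N = (\<integral>\<^sup>+ t. ennreal (max (- f t) 0) \<partial>M)"
  define Q where "Q = (\<integral>\<^sup>+ t. ennreal (f t - c) \<partial>M)"
  have "P + ennreal k = (\<integral>\<^sup>+ t. ennreal (max (f t) 0) + ennreal k \<partial>M)"
    unfolding P_def by (simp add: nn_integral_add emeasure_space_1)
  also have "\<dots> = (\<integral>\<^sup>+ t. ennreal (f t - c) + ennreal (max (- f t) 0) + ennreal (c + k) \<partial>M)"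
  proof (rule nn_integral_cong)
    fix t assume "t \<in> space M"
    with lower have "c \<le> f t" by blast
    then have "max (f t) 0 + k = (f t - c) + max (- f t) 0 + (c + k)"
      by (auto simp: max_def)
    with \<open>c \<le> f t\<close> k show "ennreal (max (f t) 0) + ennreal k
        = ennreal (f t - c) + ennreal (max (- f t) 0) + ennreal (c + k)"
      by (simp only: ennreal_plus[symmetric] add_nonneg_nonneg max.cobounded2 diff_ge_0_iff_ge)
  qed
  also have "\<dots> = Q + N + ennreal (c + k)"
    using k unfolding Q_def N_def by (simp add: nn_integral_add emeasure_space_1)
  finally have sum: "enn2ereal P + ereal k = enn2ereal Q + enn2ereal N + ereal (c + k)"
    using k by (metis enn2ereal_ennreal plus_ennreal.rep_eq)
  have "N \<le> (\<integral>\<^sup>+ t. ennreal k \<partial>M)"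
    unfolding N_def by (intro nn_integral_mono ennreal_leI neg_part_le)
  then have "N \<le> ennreal k"
    by (simp add: emeasure_space_1)
  then obtain n where n: "enn2ereal N = ereal n"
    by (cases N rule: ennreal_cases) (auto simp: top_unique)
  have "p - ereal n = q + ereal c" if "p + ereal k = q + ereal n + ereal (c + k)" for p q :: ereal
    using that by (cases p; cases q) simp_all
  from this[OF sum[unfolded n]] show ?thesis
    unfolding eint_def P_def[symmetric] N_def[symmetric] Q_def[symmetric] n .
qed

lemma eint_ge_const:
  assumes "prob_space M" "f \<in> borel_measurable M" "\<And>t. t \<in> space M \<Longrightarrow> c \<le> f t"
  shows "ereal c \<le> eint M f"
proof -
  have "ereal c \<le> enn2ereal (\<integral>\<^sup>+ t. ennreal (f t - c) \<partial>M) + ereal c"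
    by (intro add_increasing) simp_all
  then show ?thesis
    using eint_eq_nn_integral_plus[OF assms] by simp
qed

lemma eint_add_const:
  assumes "prob_space M" "f \<in> borel_measurable M" "\<And>t. t \<in> space M \<Longrightarrow> c \<le> f t"
  shows "eint M (\<lambda>t. f t + a) = eint M f + ereal a"
proof -
  have "eint M (\<lambda>t. f t + a) = enn2ereal (\<integral>\<^sup>+ t. ennreal (f t + a - (c + a)) \<partial>M) + ereal (c + a)"
    using assms by (intro eint_eq_nn_integral_plus) auto
  then show ?thesis
    by (simp add: eint_eq_nn_integral_plus[OF assms] add.assoc)
qed

lemma eint_convex_comb:
  assumes "prob_space M"
    and [measurable]: "f \<in> borel_measurable M" "g \<in> borel_measurable M"
    and f_lower: "\<And>t. t \<in> space M \<Longrightarrow> c \<le> f t"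
    and g_lower: "\<And>t. t \<in> space M \<Longrightarrow> d \<le> g t"
    and \<eta>: "0 \<le> \<eta>" "\<eta> \<le> 1"
  shows "eint M (\<lambda>t. \<eta> * f t + (1 - \<eta>) * g t) = ereal \<eta> * eint M f + ereal (1 - \<eta>) * eint M g"
proof -
  define A where "A = (\<integral>\<^sup>+ t. ennreal (f t - c) \<partial>M)"
  define B where "B = (\<integral>\<^sup>+ t. ennreal (g t - d) \<partial>M)"
  have lower: "\<eta> * c + (1 - \<eta>) * d \<le> \<eta> * f t + (1 - \<eta>) * g t" if "t \<in> space M" for t
    using f_lower[OF that] g_lower[OF that] \<eta> by (intro add_mono mult_left_mono) auto
  have "(\<integral>\<^sup>+ t. ennreal (\<eta> * f t + (1 - \<eta>) * g t - (\<eta> * c + (1 - \<eta>) * d)) \<partial>M)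
      = (\<integral>\<^sup>+ t. ennreal \<eta> * ennreal (f t - c) + ennreal (1 - \<eta>) * ennreal (g t - d) \<partial>M)"
  proof (rule nn_integral_cong)
    fix t assume "t \<in> space M"
    then have nonneg: "0 \<le> f t - c" "0 \<le> g t - d"
      using f_lower g_lower by auto
    have "ennreal \<eta> * ennreal (f t - c) + ennreal (1 - \<eta>) * ennreal (g t - d)
        = ennreal (\<eta> * (f t - c) + (1 - \<eta>) * (g t - d))"
      using nonneg \<eta> by (simp add: ennreal_mult ennreal_plus)
    then show "ennreal (\<eta> * f t + (1 - \<eta>) * g t - (\<eta> * c + (1 - \<eta>) * d))
        = ennreal \<eta> * ennreal (f t - c) + ennreal (1 - \<eta>) * ennreal (g t - d)"
      by (simp add: algebra_simps)
  qed
  also have "\<dots> = ennreal \<eta> * A + ennreal (1 - \<eta>) * B"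
    unfolding A_def B_def by (simp add: nn_integral_add nn_integral_cmult)
  finally have "eint M (\<lambda>t. \<eta> * f t + (1 - \<eta>) * g t)
      = ereal \<eta> * enn2ereal A + ereal (1 - \<eta>) * enn2ereal B + ereal (\<eta> * c + (1 - \<eta>) * d)"
    using eint_eq_nn_integral_plus[OF assms(1) _ lower] \<eta>
    by (simp add: plus_ennreal.rep_eq times_ennreal.rep_eq)
  moreover have "eint M f = enn2ereal A + ereal c" "eint M g = enn2ereal B + ereal d"
    unfolding A_def B_def using assms by (simp_all add: eint_eq_nn_integral_plus)
  moreover have "enn2ereal A \<noteq> -\<infinity>" "enn2ereal B \<noteq> -\<infinity>"
    using enn2ereal_nonneg[of A] enn2ereal_nonneg[of B] by auto
  ultimately show ?thesis
    using \<eta> by (cases "enn2ereal A"; cases "enn2ereal B"; cases "\<eta> = 0"; cases "\<eta> = 1")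
      (simp_all add: algebra_simps)
qed

section \<open>The Gaussian reference measures and admissible measures\<close>

lemma prob_space_Phi: "prob_space (Phi x)"
  unfolding Phi_def by (rule prob_space_normal_density) simp

lemma sets_Phi [simp, measurable_cong]: "sets (Phi x) = sets borel"
  unfolding Phi_def by simp

lemma space_Phi [simp]: "space (Phi x) = UNIV"
  unfolding Phi_def by simp

lemma null_sets_Phi: "null_sets (Phi x) = null_sets lborel"
proof -
  have "ennreal (normal_density (- x) 1 t) \<noteq> 0" for t
    using normal_density_pos[of 1 "- x" t] by simp
  then have Phi_null: "(A :: real set) \<in> null_sets (Phi x) \<longleftrightarrow> A \<in> sets lborel \<and> (AE t in lborel. t \<notin> A)" for A
    unfolding Phi_def by (simp add: null_sets_density_iff)
  show ?thesis
  proof (intro set_eqI iffI)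
    fix A :: "real set" assume "A \<in> null_sets (Phi x)"
    then show "A \<in> null_sets lborel"
      using Phi_null AE_iff_null_sets by blast
  next
    fix A :: "real set" assume A: "A \<in> null_sets lborel"
    then show "A \<in> null_sets (Phi x)"
      using Phi_null AE_not_in[OF A] null_setsD2[OF A] by blast
  qed
qed

lemma admissible_iff:
  "mu \<in> admissible x \<longleftrightarrow> prob_space mu \<and> sets mu = sets borel \<and> null_sets lborel \<subseteq> null_sets mu"
  unfolding admissible_def absolutely_continuous_def null_sets_Phi by simp

lemma Phi_admissible: "Phi x \<in> admissible x"
  unfolding admissible_def absolutely_continuous_def using prob_space_Phi by simp

lemma Phi_add: "Phi (x + h) = distr (Phi x) borel ((+) (- h))"
proof -
  have "Phi (x + h) = density (distr lborel borel ((+) (- h))) (\<lambda>t. ennreal (normal_density (- (x + h)) 1 t))"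
    unfolding Phi_def lborel_distr_plus ..
  also have "\<dots> = distr (density lborel (\<lambda>t. ennreal (normal_density (- (x + h)) 1 (- h + t)))) borel ((+) (- h))"
    by (rule density_distr) auto
  also have "(\<lambda>t. ennreal (normal_density (- (x + h)) 1 (- h + t))) = (\<lambda>t. ennreal (normal_density (- x) 1 t))"
    by (simp add: normal_density_def)
  finally show ?thesis
    unfolding Phi_def .
qed

lemma null_sets_lborel_translate:
  assumes "A \<in> null_sets lborel"
  shows "(+) c -` A \<in> null_sets lborel"
proof -
  have "emeasure (distr lborel borel ((+) c)) A = 0"
    using assms unfolding lborel_distr_plus by auto
  moreover have "(+) c -` A \<in> sets lborel"
    using measurable_sets[of "(+) c" lborel lborel A] assms by auto
  ultimately show ?thesis
    using assms by (subst (asm) emeasure_distr) auto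
qed

lemma admissible_distr_translate:
  assumes "mu \<in> admissible x"
  shows "distr mu borel ((+) c) \<in> admissible y"
proof -
  have "prob_space mu" and sets: "sets mu = sets borel" and ac: "null_sets lborel \<subseteq> null_sets mu"
    using assms unfolding admissible_iff by auto
  have meas: "(+) c \<in> measurable mu borel"
    using sets by (simp add: measurable_cong_sets[OF sets refl])
  have "A \<in> null_sets (distr mu borel ((+) c))" if A: "A \<in> null_sets lborel" for A :: "real set"
  proof -
    have "(+) c -` A \<in> null_sets mu"
      using null_sets_lborel_translate[OF A] ac by auto
    then have "emeasure mu ((+) c -` A \<inter> space mu) = 0"
      using sets_eq_imp_space_eq[OF sets] by auto
    then show ?thesis
      using A by (intro null_setsI) (auto simp: emeasure_distr[OF meas])
  qed
  with prob_space.prob_space_distr[OF \<open>prob_space mu\<close> meas] show ?thesis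
    unfolding admissible_iff by auto
qed

lemma AE_admissible_translate:
  assumes mu: "mu \<in> admissible x" and [measurable]: "Measurable.pred borel P"
    and "AE y in lborel. P y"
  shows "AE \<xi> in mu. P (x + \<xi>)"
proof -
  have "sets mu = sets lborel" and "absolutely_continuous lborel mu"
    using mu unfolding admissible_iff absolutely_continuous_def by auto
  moreover have "AE y in distr lborel borel ((+) x). P y"
    unfolding lborel_distr_plus by fact
  then have "AE \<xi> in lborel. P (x + \<xi>)"
    by (simp add: AE_distr_iff)
  ultimately show ?thesis
    by (rule absolutely_continuous_AE)
qed

section \<open>Kullback-Leibler divergence\<close>

lemma x_ln_x_ge_minus_one:
  assumes "0 \<le> (r::real)"
  shows "- 1 \<le> r * ln r"
proof (cases "r = 0")
  case False
  with assms have "0 < r" by simp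
  then have "- ln r \<le> 1 / r - 1"
    using ln_le_minus_one[of "1 / r"] by (simp add: ln_div)
  with \<open>0 < r\<close> have "r * (- ln r) \<le> 1 - r"
    using mult_left_mono[of "- ln r" "1 / r - 1" r] by (simp add: field_simps)
  with \<open>0 < r\<close> show ?thesis
    by simp
qed simp

lemma DKL_Phi_ge_minus_one: "ereal (- 1) \<le> DKL mu (Phi x)"
  unfolding DKL_def by (rule eint_ge_const[OF prob_space_Phi]) (simp_all add: x_ln_x_ge_minus_one)

lemma DKL_Phi_self_le_0: "DKL (Phi x) (Phi x) \<le> 0"
proof -
  interpret prob_space "Phi x" by (rule prob_space_Phi)
  have "AE t in Phi x. 1 = RN_deriv (Phi x) (Phi x) t"
    by (rule RN_deriv_unique) (auto simp: density_1)
  then have "DKL (Phi x) (Phi x) \<le> eint (Phi x) (\<lambda>_. 0)"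
    unfolding DKL_def by (intro eint_mono_AE) (auto elim!: eventually_mono dest: sym)
  then show ?thesis
    by (simp add: eint_def)
qed

lemma DKL_distr_translate:
  assumes mu: "mu \<in> admissible x"
  shows "DKL (distr mu borel ((+) c)) (distr (Phi x) borel ((+) c)) = DKL mu (Phi x)"
proof -
  interpret prob_space "Phi x" by (rule prob_space_Phi)
  define \<rho> where "\<rho> = RN_deriv (distr (Phi x) borel ((+) c)) (distr mu borel ((+) c))"
  have "distr (Phi x) borel ((+) c) = Phi (x - c)"
    using Phi_add[of x "- c"] by simp
  then have ac: "absolutely_continuous (distr (Phi x) borel ((+) c)) (distr mu borel ((+) c))"
    using admissible_distr_translate[OF mu, of c "x - c"] unfolding admissible_def by simp
  have "sets mu = sets (Phi x)"
    using mu unfolding admissible_iff by simp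
  with ac have "AE t in Phi x. \<rho> (c + t) = RN_deriv (Phi x) mu t"
    unfolding \<rho>_def by (intro RN_deriv_distr[where T' = "(+) (- c)"]) auto
  moreover have "\<rho> \<in> borel_measurable (distr (Phi x) borel ((+) c))"
    unfolding \<rho>_def by (rule borel_measurable_RN_deriv)
  then have "\<rho> \<in> borel_measurable borel"
    by (subst (asm) measurable_cong_sets[of _ borel]) auto
  then have "(\<lambda>t. enn2real (\<rho> t) * ln (enn2real (\<rho> t))) \<in> borel_measurable borel"
    by measurable
  ultimately show ?thesis
    unfolding DKL_def \<rho>_def[symmetric]
    by (subst eint_distr) (auto intro!: antisym eint_mono_AE elim!: eventually_mono)
qed

section \<open>Polynomial growth and the essential supremum\<close>

lemma powr_le_1_plus_even_power:
  fixes y \<beta> :: real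
  assumes "0 \<le> \<beta>"
  shows "\<bar>y\<bar> powr \<beta> \<le> 1 + y ^ (2 * nat \<lceil>\<beta>\<rceil>)"
proof (cases "\<bar>y\<bar> \<le> 1")
  case True
  then have "\<bar>y\<bar> powr \<beta> \<le> 1"
    using assms by (simp add: powr_le1)
  moreover have "0 \<le> y ^ (2 * nat \<lceil>\<beta>\<rceil>)"
    by (simp add: power_mult)
  ultimately show ?thesis
    by linarith
next
  case False
  have "\<bar>y\<bar> powr \<beta> \<le> \<bar>y\<bar> powr real (2 * nat \<lceil>\<beta>\<rceil>)"
    using False assms by (intro powr_mono) linarith+
  also have "\<dots> = \<bar>y\<bar> ^ (2 * nat \<lceil>\<beta>\<rceil>)"
    using False by (subst powr_realpow) auto
  also have "\<dots> = y ^ (2 * nat \<lceil>\<beta>\<rceil>)"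
    by (simp add: power_mult)
  finally show ?thesis
    by simp
qed

lemma abs_le_1_plus_square: "\<bar>a :: real\<bar> \<le> 1 + a\<^sup>2"
proof (cases "\<bar>a\<bar> \<le> 1")
  case True
  then show ?thesis
    using zero_le_power2[of a] by linarith
next
  case False
  then have "\<bar>a\<bar> * 1 \<le> \<bar>a\<bar> * \<bar>a\<bar>"
    by (intro mult_left_mono) auto
  then show ?thesis
    by (simp add: power2_eq_square)
qed

lemma FF_E:
  assumes "phi \<in> FF"
  obtains b B n where "phi \<in> borel_measurable borel" "\<And>y. b \<le> phi y"
    "0 \<le> B" "\<And>y. \<bar>phi y\<bar> \<le> B * (2 + y ^ (2 * n))"
proof -
  obtain \<beta> where meas: "phi \<in> borel_measurable borel" and "bdd_below (range phi)" "0 \<le> \<beta>"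
    and "bdd_above (range (\<lambda>y. \<bar>phi y\<bar> / (1 + \<bar>y\<bar> powr \<beta>)))"
    using assms unfolding FF_def by auto
  then obtain b B where b: "\<And>y. b \<le> phi y" and B: "\<And>y. \<bar>phi y\<bar> / (1 + \<bar>y\<bar> powr \<beta>) \<le> B"
    unfolding bdd_below_def bdd_above_def by auto
  have "0 \<le> B"
    using B[of 0] by (smt (verit) divide_nonneg_nonneg powr_ge_zero)
  have "\<bar>phi y\<bar> \<le> B * (2 + y ^ (2 * nat \<lceil>\<beta>\<rceil>))" for y
  proof -
    have "\<bar>phi y\<bar> \<le> B * (1 + \<bar>y\<bar> powr \<beta>)"
      using B[of y] by (simp add: divide_le_eq add_pos_nonneg mult.commute)
    also have "\<dots> \<le> B * (2 + y ^ (2 * nat \<lceil>\<beta>\<rceil>))"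
      using powr_le_1_plus_even_power[OF \<open>0 \<le> \<beta>\<close>, of y] \<open>0 \<le> B\<close> by (intro mult_left_mono) auto
    finally show ?thesis .
  qed
  with that meas b \<open>0 \<le> B\<close> show ?thesis
    by blast
qed

lemma integrable_Phi_power: "integrable (Phi x) (\<lambda>\<xi>. (\<xi> + x) ^ k)"
proof -
  have "integrable lborel (\<lambda>\<xi>. normal_density (- x) 1 \<xi> * (\<xi> - - x) ^ k)"
    by (rule integrable_normal_moment) simp
  then show ?thesis
    unfolding Phi_def by (subst integrable_real_density) auto
qed

lemma Linf_nonneg: "0 \<le> Linf f"
proof -
  have "esssup lborel (\<lambda>_ :: real. 0 :: ereal) \<le> Linf f"
    unfolding Linf_def by (rule esssup_mono[of "\<lambda>_. 0 :: ereal"]) auto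
  then show ?thesis
    by (simp add: esssup_const)
qed

lemma Linf_le_Linf:
  assumes [measurable]: "g \<in> borel_measurable borel"
    and bound: "\<And>r x. AE y in lborel. \<bar>f y\<bar> \<le> r \<Longrightarrow> \<bar>g x\<bar> \<le> r"
  shows "Linf g \<le> Linf f"
proof (cases "Linf f")
  case (real r)
  have "AE y in lborel. ereal \<bar>f y\<bar> \<le> Linf f"
    unfolding Linf_def by (rule esssup_AE)
  then have "\<bar>g x\<bar> \<le> r" for x
    using real by (intro bound) (auto elim: eventually_mono)
  then have "Linf g \<le> ereal r"
    unfolding Linf_def by (intro esssup_I) auto
  with real show ?thesis
    by simp
qed (use Linf_nonneg[of f] in auto)

section \<open>The operator\<close>

lemma ereal_convex_comb_add:
  fixes a b d :: ereal
  assumes "0 \<le> \<eta>" "\<eta> \<le> 1" "a \<noteq> -\<infinity>" "b \<noteq> -\<infinity>" "d \<noteq> -\<infinity>"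
  shows "ereal \<eta> * a + ereal (1 - \<eta>) * b + d = ereal \<eta> * (a + d) + ereal (1 - \<eta>) * (b + d)"
  using assms by (cases a; cases b; cases d; cases "\<eta> = 0"; cases "\<eta> = 1") (simp_all add: algebra_simps)

lemma INF_le_INF_plus_ereal:
  fixes f g :: "'a \<Rightarrow> ereal"
  assumes "\<And>i. i \<in> A \<Longrightarrow> \<exists>j\<in>B. g j \<le> f i + ereal c"
  shows "(INF j\<in>B. g j) \<le> (INF i\<in>A. f i) + ereal c"
proof -
  have "(INF j\<in>B. g j) - ereal c \<le> (INF i\<in>A. f i)"
  proof (rule INF_greatest)
    fix i assume "i \<in> A"
    with assms obtain j where "j \<in> B" "g j \<le> f i + ereal c" by blast
    then have "(INF j\<in>B. g j) \<le> f i + ereal c"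
      by (meson INF_lower order_trans)
    then show "(INF j\<in>B. g j) - ereal c \<le> f i"
      by (simp add: ereal_minus_le)
  qed
  then show ?thesis
    by (simp add: ereal_minus_le)
qed

definition Mop_objective ::
    "(real \<Rightarrow> real) \<Rightarrow> real \<Rightarrow> (real \<Rightarrow> real) \<Rightarrow> real \<Rightarrow> real measure \<Rightarrow> ereal" where
  "Mop_objective l lam phi x mu = eint mu (\<lambda>\<xi>. phi (x + \<xi>) + l \<xi>) + ereal lam * DKL mu (Phi x)"

lemma Mop_eq_INF_objective: "Mop l lam phi x = (INF mu\<in>admissible x. Mop_objective l lam phi x mu)"
  unfolding Mop_def Mop_objective_def ..

lemma Mop_le_objective: "mu \<in> admissible x \<Longrightarrow> Mop l lam phi x \<le> Mop_objective l lam phi x mu"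
  unfolding Mop_eq_INF_objective by (rule INF_lower)

lemma Mop_mono:
  assumes "\<And>y. phi1 y \<le> phi2 y"
  shows "Mop l lam phi1 x \<le> Mop l lam phi2 x"
  unfolding Mop_eq_INF_objective
proof (rule INF_mono)
  fix mu assume "mu \<in> admissible x"
  moreover have "Mop_objective l lam phi1 x mu \<le> Mop_objective l lam phi2 x mu"
    unfolding Mop_objective_def using assms by (intro add_right_mono eint_mono_AE AE_I2) auto
  ultimately show "\<exists>mu'\<in>admissible x. Mop_objective l lam phi1 x mu' \<le> Mop_objective l lam phi2 x mu"
    by blast
qed

context
  fixes l :: "real \<Rightarrow> real" and L K lam :: real
  assumes l_lipschitz: "L-lipschitz_on UNIV l"
    and l_lower: "\<And>t. K \<le> l t"
    and lam_nonneg: "0 \<le> lam"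
begin

lemma l_measurable [measurable]: "l \<in> borel_measurable borel"
  using l_lipschitz by (intro borel_measurable_continuous_onI lipschitz_on_continuous_on)

lemma l_add_le: "l (a + t) \<le> l t + L * \<bar>a\<bar>"
  using lipschitz_onD[OF l_lipschitz, of "a + t" t] by (simp add: dist_real_def)

lemma integrand_measurable:
  assumes "sets M = sets borel" and [measurable]: "phi \<in> borel_measurable borel"
  shows "(\<lambda>\<xi>. phi (a + \<xi>) + l \<xi>) \<in> borel_measurable M"
  by (subst measurable_cong_sets[OF assms(1) refl]) measurable

lemma eint_integrand_ge:
  assumes "prob_space mu" "sets mu = sets borel"
    and [measurable]: "phi \<in> borel_measurable borel" and "\<And>y. b \<le> phi y"
  shows "ereal (b + K) \<le> eint mu (\<lambda>\<xi>. phi (x + \<xi>) + l \<xi>)"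
  using assms l_lower by (intro eint_ge_const integrand_measurable add_mono) auto

lemma eint_integrand_add_const:
  assumes "prob_space mu" "sets mu = sets borel"
    and "phi \<in> borel_measurable borel" and "\<And>y. b \<le> phi y"
  shows "eint mu (\<lambda>\<xi>. (phi (x + \<xi>) + l \<xi>) + a) = eint mu (\<lambda>\<xi>. phi (x + \<xi>) + l \<xi>) + ereal a"
  using assms l_lower by (intro eint_add_const[where c = "b + K"] integrand_measurable add_mono) auto

lemma lam_DKL_ge: "ereal (- lam) \<le> ereal lam * DKL mu (Phi x)"
  using ereal_mult_left_mono[OF DKL_Phi_ge_minus_one, of "ereal lam"] lam_nonneg by simp

lemma Mop_objective_ge:
  assumes "mu \<in> admissible x"
    and "phi \<in> borel_measurable borel" "\<And>y. b \<le> phi y"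
  shows "ereal (b + K - lam) \<le> Mop_objective l lam phi x mu"
proof -
  have "ereal (b + K) + ereal (- lam) \<le> Mop_objective l lam phi x mu"
    unfolding Mop_objective_def using assms
    by (intro add_mono eint_integrand_ge lam_DKL_ge) (auto simp: admissible_iff)
  then show ?thesis
    by simp
qed

lemma eint_Phi_integrand_finite:
  assumes "phi \<in> FF"
  shows "eint (Phi x) (\<lambda>\<xi>. phi (x + \<xi>) + l \<xi>) < \<infinity>"
proof -
  obtain B n where [measurable]: "phi \<in> borel_measurable borel"
    and "0 \<le> B" and growth: "\<And>y. \<bar>phi y\<bar> \<le> B * (2 + y ^ (2 * n))"
    using FF_E[OF assms] by metis
  have "0 \<le> L"
    using l_lipschitz by (rule lipschitz_on_nonneg)
  define h where "h \<xi> = B * (2 + (\<xi> + x) ^ (2 * n)) + \<bar>l 0\<bar> + L * (\<bar>x\<bar> + 1 + (\<xi> + x)\<^sup>2)" for \<xi>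
  have h_bound: "max (phi (x + \<xi>) + l \<xi>) 0 \<le> h \<xi>" for \<xi>
  proof -
    have "phi (x + \<xi>) \<le> B * (2 + (\<xi> + x) ^ (2 * n))"
      using growth[of "x + \<xi>"] by (simp add: add.commute)
    moreover have "\<bar>\<xi>\<bar> \<le> \<bar>x\<bar> + 1 + (\<xi> + x)\<^sup>2"
      using abs_le_1_plus_square[of "\<xi> + x"] by linarith
    then have "l \<xi> \<le> \<bar>l 0\<bar> + L * (\<bar>x\<bar> + 1 + (\<xi> + x)\<^sup>2)"
      using l_add_le[of \<xi> 0] mult_left_mono[OF _ \<open>0 \<le> L\<close>, of "\<bar>\<xi>\<bar>"] by fastforce
    moreover have "0 \<le> h \<xi>"
      unfolding h_def using \<open>0 \<le> B\<close> \<open>0 \<le> L\<close>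
      by (intro add_nonneg_nonneg mult_nonneg_nonneg) (auto simp: power_mult)
    ultimately show ?thesis
      unfolding h_def by simp
  qed
  interpret prob_space "Phi x" by (rule prob_space_Phi)
  have "integrable (Phi x) h"
    unfolding h_def by (intro integrable_Phi_power Bochner_Integration.integrable_add
        Bochner_Integration.integrable_mult_right integrable_const)
  then have "(\<integral>\<^sup>+ \<xi>. ennreal (h \<xi>) \<partial>Phi x) < \<infinity>"
    using h_bound by (simp add: nn_integral_eq_integral)
  moreover have "(\<integral>\<^sup>+ \<xi>. ennreal (max (phi (x + \<xi>) + l \<xi>) 0) \<partial>Phi x) \<le> (\<integral>\<^sup>+ \<xi>. ennreal (h \<xi>) \<partial>Phi x)"
    by (intro nn_integral_mono ennreal_leI h_bound)
  ultimately have fin: "(\<integral>\<^sup>+ \<xi>. ennreal (max (phi (x + \<xi>) + l \<xi>) 0) \<partial>Phi x) < \<infinity>"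
    by (rule le_less_trans[rotated])
  have "eint (Phi x) (\<lambda>\<xi>. phi (x + \<xi>) + l \<xi>)
      \<le> enn2ereal (\<integral>\<^sup>+ \<xi>. ennreal (max (phi (x + \<xi>) + l \<xi>) 0) \<partial>Phi x)"
    unfolding eint_def by (rule ereal_diff_le_self) simp
  also have "\<dots> < \<infinity>"
    using fin by (simp add: less_top[symmetric])
  finally show ?thesis .
qed

lemma Mop_finite:
  assumes "phi \<in> FF"
  shows "\<bar>Mop l lam phi x\<bar> \<noteq> \<infinity>"
proof -
  obtain b where "phi \<in> borel_measurable borel" "\<And>y. b \<le> phi y"
    using FF_E[OF assms] by metis
  then have lower: "ereal (b + K - lam) \<le> Mop l lam phi x"
    unfolding Mop_eq_INF_objective by (intro INF_greatest Mop_objective_ge)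
  have "Mop l lam phi x \<le> Mop_objective l lam phi x (Phi x)"
    by (rule Mop_le_objective[OF Phi_admissible])
  also have "\<dots> \<le> eint (Phi x) (\<lambda>\<xi>. phi (x + \<xi>) + l \<xi>) + ereal lam * 0"
    unfolding Mop_objective_def using lam_nonneg
    by (intro add_left_mono ereal_mult_left_mono DKL_Phi_self_le_0) simp_all
  also have "\<dots> < \<infinity>"
    using eint_Phi_integrand_finite[OF assms] by simp
  finally show ?thesis
    using lower by auto
qed

lemma Mop_add_le:
  assumes "phi \<in> FF"
  shows "Mop l lam phi (x + h) \<le> Mop l lam phi x + ereal (L * \<bar>h\<bar>)"
  unfolding Mop_eq_INF_objective
proof (rule INF_le_INF_plus_ereal)
  fix mu assume mu: "mu \<in> admissible x"
  obtain b where meas [measurable]: "phi \<in> borel_measurable borel" and b: "\<And>y. b \<le> phi y"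
    using FF_E[OF assms] by metis
  have "prob_space mu" and sets: "sets mu = sets borel"
    using mu unfolding admissible_iff by auto
  define mu' where "mu' = distr mu borel ((+) (- h))"
  have translate: "(+) (- h) \<in> measurable mu borel"
    by (subst measurable_cong_sets[OF sets refl]) simp
  have "eint mu' (\<lambda>\<xi>. phi (x + h + \<xi>) + l \<xi>) = eint mu (\<lambda>\<xi>. phi (x + h + (- h + \<xi>)) + l (- h + \<xi>))"
    unfolding mu'_def by (rule eint_distr[OF _ translate]) measurable
  also have "\<dots> \<le> eint mu (\<lambda>\<xi>. (phi (x + \<xi>) + l \<xi>) + L * \<bar>h\<bar>)"
    using l_add_le[of "- h"] by (intro eint_mono_AE AE_I2) (simp add: add.assoc)
  also have "\<dots> = eint mu (\<lambda>\<xi>. phi (x + \<xi>) + l \<xi>) + ereal (L * \<bar>h\<bar>)"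
    by (rule eint_integrand_add_const[OF \<open>prob_space mu\<close> sets meas b])
  finally have "Mop_objective l lam phi (x + h) mu'
      \<le> (eint mu (\<lambda>\<xi>. phi (x + \<xi>) + l \<xi>) + ereal (L * \<bar>h\<bar>)) + ereal lam * DKL mu (Phi x)"
    unfolding Mop_objective_def mu'_def Phi_add DKL_distr_translate[OF mu] by (rule add_right_mono)
  then have "Mop_objective l lam phi (x + h) mu' \<le> Mop_objective l lam phi x mu + ereal (L * \<bar>h\<bar>)"
    unfolding Mop_objective_def by (simp add: ac_simps)
  moreover have "mu' \<in> admissible (x + h)"
    unfolding mu'_def by (rule admissible_distr_translate[OF mu])
  ultimately show "\<exists>mu'\<in>admissible (x + h).
      Mop_objective l lam phi (x + h) mu' \<le> Mop_objective l lam phi x mu + ereal (L * \<bar>h\<bar>)"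
    by blast
qed

lemma Mop_lipschitz:
  assumes "phi \<in> FF"
  shows "L-lipschitz_on UNIV (\<lambda>x. real_of_ereal (Mop l lam phi x))"
proof (rule lipschitz_onI)
  fix x y :: real
  have "Mop l lam phi x \<le> Mop l lam phi y + ereal (L * \<bar>x - y\<bar>)"
    using Mop_add_le[OF assms, of y "x - y"] by simp
  moreover have "Mop l lam phi y \<le> Mop l lam phi x + ereal (L * \<bar>x - y\<bar>)"
    using Mop_add_le[OF assms, of x "y - x"] by (simp add: abs_minus_commute)
  ultimately show "dist (real_of_ereal (Mop l lam phi x)) (real_of_ereal (Mop l lam phi y)) \<le> L * dist x y"
    using Mop_finite[OF assms, of x] Mop_finite[OF assms, of y]
    by (cases "Mop l lam phi x"; cases "Mop l lam phi y") (auto simp: dist_real_def abs_le_iff)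
next
  show "0 \<le> L"
    using l_lipschitz by (rule lipschitz_on_nonneg)
qed

lemma Mop_le_plus_AE_bound:
  assumes [measurable]: "phi1 \<in> borel_measurable borel" and "phi2 \<in> FF"
    and bound: "AE y in lborel. \<bar>phi1 y - phi2 y\<bar> \<le> r"
  shows "Mop l lam phi1 x \<le> Mop l lam phi2 x + ereal r"
  unfolding Mop_eq_INF_objective
proof (rule INF_le_INF_plus_ereal)
  fix mu assume mu: "mu \<in> admissible x"
  obtain b where meas [measurable]: "phi2 \<in> borel_measurable borel" and b: "\<And>y. b \<le> phi2 y"
    using FF_E[OF assms(2)] by metis
  have "prob_space mu" and sets: "sets mu = sets borel"
    using mu unfolding admissible_iff by auto
  have "AE \<xi> in mu. \<bar>phi1 (x + \<xi>) - phi2 (x + \<xi>)\<bar> \<le> r"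
    by (rule AE_admissible_translate[OF mu _ bound]) measurable
  then have "eint mu (\<lambda>\<xi>. phi1 (x + \<xi>) + l \<xi>) \<le> eint mu (\<lambda>\<xi>. (phi2 (x + \<xi>) + l \<xi>) + r)"
    by (intro eint_mono_AE) (auto elim!: eventually_mono)
  also have "\<dots> = eint mu (\<lambda>\<xi>. phi2 (x + \<xi>) + l \<xi>) + ereal r"
    by (rule eint_integrand_add_const[OF \<open>prob_space mu\<close> sets meas b])
  finally have "Mop_objective l lam phi1 x mu
      \<le> (eint mu (\<lambda>\<xi>. phi2 (x + \<xi>) + l \<xi>) + ereal r) + ereal lam * DKL mu (Phi x)"
    unfolding Mop_objective_def by (rule add_right_mono)
  then have "Mop_objective l lam phi1 x mu \<le> Mop_objective l lam phi2 x mu + ereal r"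
    unfolding Mop_objective_def by (simp add: ac_simps)
  with mu show "\<exists>mu'\<in>admissible x. Mop_objective l lam phi1 x mu' \<le> Mop_objective l lam phi2 x mu + ereal r"
    by blast
qed

lemma Linf_Mop_diff_le:
  assumes "phi1 \<in> FF" "phi2 \<in> FF"
  shows "Linf (\<lambda>x. real_of_ereal (Mop l lam phi1 x) - real_of_ereal (Mop l lam phi2 x))
    \<le> Linf (\<lambda>x. phi1 x - phi2 x)"
proof (rule Linf_le_Linf)
  show "(\<lambda>x. real_of_ereal (Mop l lam phi1 x) - real_of_ereal (Mop l lam phi2 x)) \<in> borel_measurable borel"
    using Mop_lipschitz[OF assms(1)] Mop_lipschitz[OF assms(2)]
    by (intro borel_measurable_diff borel_measurable_continuous_onI lipschitz_on_continuous_on)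
next
  fix r x assume bound: "AE y in lborel. \<bar>phi1 y - phi2 y\<bar> \<le> r"
  obtain [measurable]: "phi1 \<in> borel_measurable borel" "phi2 \<in> borel_measurable borel"
    using FF_E[OF assms(1)] FF_E[OF assms(2)] by metis
  have "Mop l lam phi1 x \<le> Mop l lam phi2 x + ereal r"
    by (rule Mop_le_plus_AE_bound[OF _ assms(2) bound]) measurable
  moreover have "Mop l lam phi2 x \<le> Mop l lam phi1 x + ereal r"
    using bound by (intro Mop_le_plus_AE_bound[OF _ assms(1)]) (auto simp: abs_minus_commute)
  ultimately show "\<bar>real_of_ereal (Mop l lam phi1 x) - real_of_ereal (Mop l lam phi2 x)\<bar> \<le> r"
    using Mop_finite[OF assms(1), of x] Mop_finite[OF assms(2), of x]
    by (cases "Mop l lam phi1 x"; cases "Mop l lam phi2 x") (auto simp: abs_le_iff)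
qed

lemma Mop_objective_convex_comb:
  assumes "phi1 \<in> FF" "phi2 \<in> FF" "0 \<le> \<eta>" "\<eta> \<le> 1" and mu: "mu \<in> admissible x"
  shows "Mop_objective l lam (\<lambda>y. \<eta> * phi1 y + (1 - \<eta>) * phi2 y) x mu
    = ereal \<eta> * Mop_objective l lam phi1 x mu + ereal (1 - \<eta>) * Mop_objective l lam phi2 x mu"
proof -
  obtain b1 where meas1 [measurable]: "phi1 \<in> borel_measurable borel" and b1: "\<And>y. b1 \<le> phi1 y"
    using FF_E[OF assms(1)] by metis
  obtain b2 where meas2 [measurable]: "phi2 \<in> borel_measurable borel" and b2: "\<And>y. b2 \<le> phi2 y"
    using FF_E[OF assms(2)] by metis
  have "prob_space mu" and sets: "sets mu = sets borel"
    using mu unfolding admissible_iff by auto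
  note E1_ge = eint_integrand_ge[OF \<open>prob_space mu\<close> sets meas1 b1, of x]
  note E2_ge = eint_integrand_ge[OF \<open>prob_space mu\<close> sets meas2 b2, of x]
  have "eint mu (\<lambda>\<xi>. (\<eta> * phi1 (x + \<xi>) + (1 - \<eta>) * phi2 (x + \<xi>)) + l \<xi>)
      = eint mu (\<lambda>\<xi>. \<eta> * (phi1 (x + \<xi>) + l \<xi>) + (1 - \<eta>) * (phi2 (x + \<xi>) + l \<xi>))"
    by (simp add: algebra_simps)
  also have "\<dots> = ereal \<eta> * eint mu (\<lambda>\<xi>. phi1 (x + \<xi>) + l \<xi>)
      + ereal (1 - \<eta>) * eint mu (\<lambda>\<xi>. phi2 (x + \<xi>) + l \<xi>)"
    using assms(3,4) b1 b2 l_lower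
    by (intro eint_convex_comb[OF \<open>prob_space mu\<close> integrand_measurable[OF sets meas1]
        integrand_measurable[OF sets meas2], where c = "b1 + K" and d = "b2 + K"]) (auto intro: add_mono)
  finally have mixed: "eint mu (\<lambda>\<xi>. \<eta> * phi1 (x + \<xi>) + (1 - \<eta>) * phi2 (x + \<xi>) + l \<xi>)
      = ereal \<eta> * eint mu (\<lambda>\<xi>. phi1 (x + \<xi>) + l \<xi>)
        + ereal (1 - \<eta>) * eint mu (\<lambda>\<xi>. phi2 (x + \<xi>) + l \<xi>)" .
  show ?thesis
    unfolding Mop_objective_def mixed using E1_ge E2_ge lam_DKL_ge[of mu x] assms(3,4)
    by (intro ereal_convex_comb_add) auto
qed

lemma Mop_concave:
  assumes "phi1 \<in> FF" "phi2 \<in> FF" "0 \<le> \<eta>" "\<eta> \<le> 1"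
  shows "ereal \<eta> * Mop l lam phi1 x + ereal (1 - \<eta>) * Mop l lam phi2 x
    \<le> Mop l lam (\<lambda>y. \<eta> * phi1 y + (1 - \<eta>) * phi2 y) x"
  unfolding Mop_eq_INF_objective[of l lam "\<lambda>y. \<eta> * phi1 y + (1 - \<eta>) * phi2 y"]
proof (rule INF_greatest)
  fix mu assume mu: "mu \<in> admissible x"
  have "ereal \<eta> * Mop l lam phi1 x + ereal (1 - \<eta>) * Mop l lam phi2 x
      \<le> ereal \<eta> * Mop_objective l lam phi1 x mu + ereal (1 - \<eta>) * Mop_objective l lam phi2 x mu"
    using assms(3,4) by (intro add_mono ereal_mult_left_mono Mop_le_objective mu) auto
  then show "ereal \<eta> * Mop l lam phi1 x + ereal (1 - \<eta>) * Mop l lam phi2 x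
      \<le> Mop_objective l lam (\<lambda>y. \<eta> * phi1 y + (1 - \<eta>) * phi2 y) x mu"
    by (simp only: Mop_objective_convex_comb[OF assms mu])
qed

end

theorem lemma3p1:
  fixes l :: "real \<Rightarrow> real" and K Ll lam :: real
  assumes K_pos: "K > 0"
    and l0: "l 0 = K" and l_min: "\<And>x. l 0 \<le> l x"
    and l_sub: "\<And>x y. l x + l y \<ge> l (x + y) + K"
    and l_coercive: "filterlim l at_top at_infinity"
    and Ll_pos: "Ll > 0" and l_lip: "Ll-lipschitz_on UNIV l"
    and lam_pos: "lam > 0"
  shows "(\<forall>phi \<in> FF. \<forall>x. Mop l lam phi x \<noteq> \<infinity> \<and> Mop l lam phi x \<noteq> - \<infinity>)
    \<and> (\<forall>phi1 \<in> FF. \<forall>phi2 \<in> FF.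
         Linf (\<lambda>x. real_of_ereal (Mop l lam phi1 x) - real_of_ereal (Mop l lam phi2 x))
           \<le> Linf (\<lambda>x. phi1 x - phi2 x))
    \<and> (\<forall>phi1 \<in> FF. \<forall>phi2 \<in> FF. \<forall>\<eta>::real. 0 \<le> \<eta> \<and> \<eta> \<le> 1 \<longrightarrow>
         (\<forall>x. ereal \<eta> * Mop l lam phi1 x + ereal (1 - \<eta>) * Mop l lam phi2 x
                \<le> Mop l lam (\<lambda>y. \<eta> * phi1 y + (1 - \<eta>) * phi2 y) x))
    \<and> (\<forall>phi1 \<in> FF. \<forall>phi2 \<in> FF. (\<forall>y. phi1 y \<le> phi2 y) \<longrightarrow>
         (\<forall>x. Mop l lam phi1 x \<le> Mop l lam phi2 x))"
proof -
  have l_lower: "K \<le> l t" for t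
    using l_min[of t] unfolding l0 .
  have "0 \<le> lam"
    using lam_pos by simp
  note hyps = l_lip l_lower this
  have "Mop l lam phi x \<noteq> \<infinity> \<and> Mop l lam phi x \<noteq> - \<infinity>" if "phi \<in> FF" for phi x
    using Mop_finite[OF hyps that, of x] by auto
  then show ?thesis
    using Linf_Mop_diff_le[OF hyps] Mop_concave[OF hyps] Mop_mono by blast
qed

end
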